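(* With $A,B,C$ as defined, set $\Sigma=B+C$. The map sending the conjugacy class of $f\in\mathrm{Rat}_2$ to $(A,\Sigma)$ (computed from either critical marking of $f$) is a well-defined bijection from $\mathcal M_2$ onto $\mathbf C^2$.
   Context: $\mathrm{Rat}_2$ is the space of holomorphic degree-$2$ maps of the Riemann sphere; $\mathcal M_2$ is the set of its Möbius conjugacy classes. Every $f\in\mathrm{Rat}_2$, together with an ordering $(\omega_1,\omega_2)$ of its two critical points, is Möbius conjugate (sending $\omega_1\mapsto0$, $\omega_2\mapsto\infty$) to a map $z\mapsto(\alpha z^2+\beta)/(\gamma z^2+\delta)$ with $\alpha\delta-\beta\gamma=1$, unique up to $(\alpha,\beta,\gamma,\delta)\mapsto(\alpha\lambda,\beta\lambda^{-3},\gamma\lambda^3,\delta\lambda^{-1})$, $\lambda\in\mathbf C\setminus\{0\}$; set $A=\alpha\delta$, $B=\alpha^3\beta$, $C=\gamma\delta^3$. Reversing the ordering of the critical points replaces $(A,B,C)$ by $(A,C,B)$. *)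

theory Defs
  imports Complex_Main "HOL-Computational_Algebra.Polynomial"
begin

text \<open>The Riemann sphere is modelled as \<open>complex option\<close>: \<open>Some z\<close> is the finite
  point z and \<open>None\<close> is the point at infinity.\<close>

type_synonym sphere = "complex option"

text \<open>Rational map z \<mapsto> p(z)/q(z) of degree d, i.e. [z:w] \<mapsto> [P(z,w):Q(z,w)] with
  P(z,w) = w^d p(z/w), Q(z,w) = w^d q(z/w); at infinity [1:0] one gets
  [coeff p d : coeff q d].\<close>

definition rat_map :: "complex poly \<Rightarrow> complex poly \<Rightarrow> nat \<Rightarrow> sphere \<Rightarrow> sphere" where
  "rat_map p q d x = (case x of
      Some z \<Rightarrow> (if poly q z = 0 then None else Some (poly p z / poly q z))
    | None \<Rightarrow> (if coeff q d = 0 then None else Some (coeff p d / coeff q d)))"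

text \<open>Admissible pair: homogeneous polynomials of degree d with no common zero
  on C^2 minus 0 (no common finite root, and not both of degree < d).\<close>

definition admissible :: "complex poly \<Rightarrow> complex poly \<Rightarrow> nat \<Rightarrow> bool" where
  "admissible p q d \<longleftrightarrow> degree p \<le> d \<and> degree q \<le> d \<and>
     (coeff p d \<noteq> 0 \<or> coeff q d \<noteq> 0) \<and> (\<forall>z. poly p z \<noteq> 0 \<or> poly q z \<noteq> 0)"

definition Rat2 :: "(sphere \<Rightarrow> sphere) set" where
  "Rat2 = {rat_map p q 2 | p q. admissible p q 2}"

definition moebius :: "(sphere \<Rightarrow> sphere) \<Rightarrow> bool" where
  "moebius \<phi> \<longleftrightarrow> (\<exists>a b c d. a * d - b * c \<noteq> 0 \<and> \<phi> = rat_map [:b, a:] [:d, c:] 1)"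

definition mconj :: "((sphere \<Rightarrow> sphere) \<times> (sphere \<Rightarrow> sphere)) set" where
  "mconj = {(f, g). f \<in> Rat2 \<and> g \<in> Rat2 \<and> (\<exists>\<phi>. moebius \<phi> \<and> g \<circ> \<phi> = \<phi> \<circ> f)}"

definition M2 :: "(sphere \<Rightarrow> sphere) set set" where
  "M2 = Rat2 // mconj"

text \<open>Normal form z \<mapsto> (\<alpha> z^2 + \<beta>)/(\<gamma> z^2 + \<delta>); its critical points are 0 and \<infinity>.\<close>

definition normal_form :: "complex \<Rightarrow> complex \<Rightarrow> complex \<Rightarrow> complex \<Rightarrow> sphere \<Rightarrow> sphere" where
  "normal_form \<alpha> \<beta> \<gamma> \<delta> = rat_map [:\<beta>, 0, \<alpha>:] [:\<delta>, 0, \<gamma>:] 2"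

text \<open>\<open>AS_value f a s\<close>: (a, s) = (A, B + C) is obtained from some critical marking of f,
  i.e. from some Moebius \<phi> (sending the critical points of f to 0 and \<infinity>, in either order)
  conjugating f to a normal form with \<alpha>\<delta> - \<beta>\<gamma> = 1, where A = \<alpha>\<delta>, B = \<alpha>^3\<beta>, C = \<gamma>\<delta>^3.\<close>

definition AS_value :: "(sphere \<Rightarrow> sphere) \<Rightarrow> complex \<Rightarrow> complex \<Rightarrow> bool" where
  "AS_value f a s \<longleftrightarrow> (\<exists>\<phi> \<alpha> \<beta> \<gamma> \<delta>. moebius \<phi> \<and> \<alpha> * \<delta> - \<beta> * \<gamma> = 1 \<and>
      \<phi> \<circ> f = normal_form \<alpha> \<beta> \<gamma> \<delta> \<circ> \<phi> \<and>
      a = \<alpha> * \<delta> \<and> s = \<alpha> ^ 3 * \<beta> + \<gamma> * \<delta> ^ 3)"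

end

theory Submission
  imports Defs
begin

text \<open>
  A Moebius map conjugating two normal forms permutes their common critical points 0 and \<infinity>,
  so it is z \<mapsto> k z or z \<mapsto> k / z. The first kind preserves (A, B, C) and the second swaps
  B and C, hence (A, B + C) is a conjugacy invariant. Conversely B C = A^3 (A - 1), so
  (A, B + C) determines A and the pair {B, C}; normal forms with equal (A, B, C) differ by the
  scaling (\<alpha>, \<beta>, \<gamma>, \<delta>) \<mapsto> (\<alpha> \<lambda>, \<beta> / \<lambda>^3, \<gamma> \<lambda>^3, \<delta> / \<lambda>), which is conjugation by z \<mapsto> \<lambda>^2 z.
  Every f in Rat2 has a normal form: the critical points of f are the zeros of the Jacobian of
  its homogeneous lift (P, Q), and they are distinct because the discriminant of the Jacobian is
  the resultant of P and Q. In coordinates sending them to 0 and \<infinity> the forms P and Q are even,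
  so f becomes a Moebius map composed with z \<mapsto> z^2.
\<close>

section \<open>Classifying a quotient by a complete invariant\<close>

lemma the_value_on_class:
  assumes equiv: "equiv X E" and "x \<in> X" "R x v"
    and unique: "\<And>w. R x w \<Longrightarrow> w = v"
    and invariant: "\<And>x y v. (x, y) \<in> E \<Longrightarrow> R x v \<Longrightarrow> R y v"
  shows "(THE w. \<exists>x' \<in> E `` {x}. R x' w) = v"
proof (rule the_equality)
  show "\<exists>x' \<in> E `` {x}. R x' v"
    using equiv_class_self[OF equiv \<open>x \<in> X\<close>] \<open>R x v\<close> by blast
next
  fix w
  assume "\<exists>x' \<in> E `` {x}. R x' w"
  then obtain x' where "(x, x') \<in> E" "R x' w"
    by blast
  moreover from this(1) have "(x', x) \<in> E"
    using equiv by (auto elim: equivE simp: sym_def)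
  ultimately show "w = v"
    by (blast intro: invariant unique)
qed

lemma quotient_bij_betw_complete_invariant:
  assumes equiv: "equiv X E"
    and total: "\<And>x. x \<in> X \<Longrightarrow> \<exists>v. R x v"
    and unique: "\<And>x v w. x \<in> X \<Longrightarrow> R x v \<Longrightarrow> R x w \<Longrightarrow> v = w"
    and invariant: "\<And>x y v. (x, y) \<in> E \<Longrightarrow> R x v \<Longrightarrow> R y v"
    and separating: "\<And>x y v. x \<in> X \<Longrightarrow> y \<in> X \<Longrightarrow> R x v \<Longrightarrow> R y v \<Longrightarrow> (x, y) \<in> E"
    and surjective: "\<And>v. \<exists>x \<in> X. R x v"
  shows "\<exists>\<Phi>. bij_betw \<Phi> (X // E) UNIV \<and> (\<forall>x \<in> X. \<forall>v. R x v \<longleftrightarrow> \<Phi> (E `` {x}) = v)"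
proof -
  define \<Phi> where "\<Phi> C = (THE v. \<exists>x \<in> C. R x v)" for C
  have \<Phi>_class: "R x v \<longleftrightarrow> \<Phi> (E `` {x}) = v" if x: "x \<in> X" for x v
  proof -
    obtain v0 where v0: "R x v0"
      using total[OF x] by blast
    have "\<Phi> (E `` {x}) = v0"
      unfolding \<Phi>_def using equiv x v0 unique[OF x _ v0] invariant by (rule the_value_on_class)
    then show ?thesis
      using v0 unique[OF x] by blast
  qed
  have "inj_on \<Phi> (X // E)"
  proof (rule inj_onI)
    fix C D
    assume "C \<in> X // E" "D \<in> X // E" and eq: "\<Phi> C = \<Phi> D"
    then obtain x y where x: "x \<in> X" "C = E `` {x}" and y: "y \<in> X" "D = E `` {y}"
      by (auto elim!: quotientE)
    have "R x (\<Phi> C)" "R y (\<Phi> C)"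
      using \<Phi>_class x y eq by simp_all
    then have "(x, y) \<in> E"
      by (rule separating[OF x(1) y(1)])
    then show "C = D"
      using x y equiv_class_eq[OF equiv] by simp
  qed
  moreover have "\<Phi> ` (X // E) = UNIV"
  proof (intro set_eqI iffI)
    fix v
    obtain x where "x \<in> X" "R x v"
      using surjective by blast
    then have "\<Phi> (E `` {x}) = v" "E `` {x} \<in> X // E"
      using \<Phi>_class quotientI by simp_all
    then show "v \<in> \<Phi> ` (X // E)"
      by blast
  qed simp
  ultimately show ?thesis
    using \<Phi>_class unfolding bij_betw_def by blast
qed

section \<open>Homogeneous coordinates and Moebius maps\<close>

text \<open>The pair (0, 0) is sent to the junk value \<infinity>; lemmas about \<open>proj\<close> assume (x, y) \<noteq> (0, 0).\<close>

definition proj :: "complex \<Rightarrow> complex \<Rightarrow> sphere" where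
  "proj x y = (if y = 0 then None else Some (x / y))"

lemma proj_0_1 [simp]: "proj 0 1 = Some 0"
  and proj_1_0 [simp]: "proj 1 0 = None"
  by (simp_all add: proj_def)

lemma proj_scale: "k \<noteq> 0 \<Longrightarrow> proj (k * x) (k * y) = proj x y"
  by (simp add: proj_def)

lemma proj_eq_iff:
  assumes "x \<noteq> 0 \<or> y \<noteq> 0" "x' \<noteq> 0 \<or> y' \<noteq> 0"
  shows "proj x y = proj x' y' \<longleftrightarrow> x * y' = x' * y"
  using assms by (auto simp: proj_def field_simps)

lemma sphere_fun_eqI:
  assumes "\<And>x y. x \<noteq> 0 \<or> y \<noteq> 0 \<Longrightarrow> F (proj x y) = G (proj x y)"
  shows "F = G"
proof
  fix P :: sphere
  show "F P = G P"
  proof (cases P)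
    case None
    then show ?thesis using assms[of 1 0] by simp
  next
    case (Some z)
    then show ?thesis using assms[of z 1] by (simp add: proj_def)
  qed
qed

definition mob :: "complex \<Rightarrow> complex \<Rightarrow> complex \<Rightarrow> complex \<Rightarrow> sphere \<Rightarrow> sphere" where
  "mob a b c d = rat_map [:b, a:] [:d, c:] 1"

lemma moebius_iff_mob: "moebius \<phi> \<longleftrightarrow> (\<exists>a b c d. a * d - b * c \<noteq> 0 \<and> \<phi> = mob a b c d)"
  by (simp add: moebius_def mob_def)

lemma moebius_mob: "a * d - b * c \<noteq> 0 \<Longrightarrow> moebius (mob a b c d)"
  unfolding moebius_iff_mob by blast

lemma matrix_image_nonzero:
  fixes a b c d x y :: "'a :: idom"
  assumes "a * d - b * c \<noteq> 0" "x \<noteq> 0 \<or> y \<noteq> 0"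
  shows "a * x + b * y \<noteq> 0 \<or> c * x + d * y \<noteq> 0"
proof (rule ccontr)
  assume "\<not> ?thesis"
  then have "a * x + b * y = 0" "c * x + d * y = 0" by auto
  moreover have "(a * d - b * c) * x = d * (a * x + b * y) - b * (c * x + d * y)"
    and "(a * d - b * c) * y = a * (c * x + d * y) - c * (a * x + b * y)"
    by (simp_all add: algebra_simps)
  ultimately show False using assms by auto
qed

lemma mob_proj:
  assumes "x \<noteq> 0 \<or> y \<noteq> 0"
  shows "mob a b c d (proj x y) = proj (a * x + b * y) (c * x + d * y)"
proof (cases "y = 0")
  case True
  then show ?thesis using assms by (simp add: mob_def rat_map_def proj_def)
next
  case False
  then have "a * x + b * y = y * (b + a * (x / y))" "c * x + d * y = y * (d + c * (x / y))"
    by (simp_all add: field_simps)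
  then show ?thesis using False by (simp add: mob_def rat_map_def proj_def ac_simps)
qed

lemma mob_comp:
  assumes "a' * d' - b' * c' \<noteq> 0"
  shows "mob a b c d \<circ> mob a' b' c' d'
       = mob (a * a' + b * c') (a * b' + b * d') (c * a' + d * c') (c * b' + d * d')"
proof (rule sphere_fun_eqI)
  fix x y :: complex
  assume nz: "x \<noteq> 0 \<or> y \<noteq> 0"
  then have "a' * x + b' * y \<noteq> 0 \<or> c' * x + d' * y \<noteq> 0"
    by (rule matrix_image_nonzero[OF assms])
  with nz show "(mob a b c d \<circ> mob a' b' c' d') (proj x y)
      = mob (a * a' + b * c') (a * b' + b * d') (c * a' + d * c') (c * b' + d * d') (proj x y)"
    by (simp add: mob_proj algebra_simps)
qed

lemma mob_scale:
  assumes "k \<noteq> 0"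
  shows "mob (k * a) (k * b) (k * c) (k * d) = mob a b c d"
proof (rule sphere_fun_eqI)
  fix x y :: complex
  assume "x \<noteq> 0 \<or> y \<noteq> 0"
  then show "mob (k * a) (k * b) (k * c) (k * d) (proj x y) = mob a b c d (proj x y)"
    using proj_scale[OF assms, of "a * x + b * y" "c * x + d * y"]
    by (simp add: mob_proj algebra_simps)
qed

lemma mob_id: "mob 1 0 0 1 = id"
  by (rule sphere_fun_eqI) (simp add: mob_proj)

lemma mob_inverse:
  assumes "a * d - b * c \<noteq> 0"
  shows "mob d (- b) (- c) a \<circ> mob a b c d = id"
proof -
  have "mob d (- b) (- c) a \<circ> mob a b c d
      = mob ((a * d - b * c) * 1) ((a * d - b * c) * 0) ((a * d - b * c) * 0) ((a * d - b * c) * 1)"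
    by (simp add: mob_comp[OF assms] algebra_simps)
  then show ?thesis
    unfolding mob_scale[OF assms] mob_id .
qed

lemma moebius_id: "moebius id"
  using moebius_mob[of 1 1 0 0] by (simp add: mob_id)

lemma moebius_comp: "moebius \<phi> \<Longrightarrow> moebius \<psi> \<Longrightarrow> moebius (\<phi> \<circ> \<psi>)"
proof -
  assume "moebius \<phi>" "moebius \<psi>"
  then obtain a b c d a' b' c' d' where
    "a * d - b * c \<noteq> 0" "\<phi> = mob a b c d" and \<psi>: "a' * d' - b' * c' \<noteq> 0" "\<psi> = mob a' b' c' d'"
    by (auto simp: moebius_iff_mob)
  moreover have "(a * a' + b * c') * (c * b' + d * d') - (a * b' + b * d') * (c * a' + d * c')
      = (a * d - b * c) * (a' * d' - b' * c')"
    by (simp add: algebra_simps)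
  ultimately show ?thesis
    unfolding moebius_iff_mob by (metis mob_comp mult_eq_0_iff)
qed

lemma moebius_inverse:
  assumes "moebius \<phi>"
  obtains \<phi>' where "moebius \<phi>'" "\<phi>' \<circ> \<phi> = id" "\<phi> \<circ> \<phi>' = id"
proof -
  obtain a b c d where det: "a * d - b * c \<noteq> 0" and \<phi>: "\<phi> = mob a b c d"
    using assms by (auto simp: moebius_iff_mob)
  have det': "d * a - (- b) * (- c) \<noteq> 0"
    using det by (simp add: algebra_simps)
  show ?thesis
  proof
    show "moebius (mob d (- b) (- c) a)"
      using det' by (rule moebius_mob)
    show "mob d (- b) (- c) a \<circ> \<phi> = id"
      using mob_inverse[OF det] \<phi> by simp
    show "\<phi> \<circ> mob d (- b) (- c) a = id"
      using mob_inverse[OF det'] \<phi> by simp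
  qed
qed

lemma moebius_bij: "moebius \<phi> \<Longrightarrow> bij \<phi>"
  by (metis moebius_inverse o_bij)

lemma bij_mob: "a * d - b * c \<noteq> 0 \<Longrightarrow> bij (mob a b c d)"
  by (intro moebius_bij moebius_mob)

lemma mob_eq_imp_proportional:
  fixes a b c d a' b' c' d' :: complex
  assumes det: "a * d - b * c \<noteq> 0" and det': "a' * d' - b' * c' \<noteq> 0"
    and eq: "mob a b c d = mob a' b' c' d'"
  shows "\<exists>\<mu>. a' = \<mu> * a \<and> b' = \<mu> * b \<and> c' = \<mu> * c \<and> d' = \<mu> * d"
proof -
  have cross: "(a * u + b * v) * (c' * u + d' * v) = (a' * u + b' * v) * (c * u + d * v)" for u v
  proof (cases "u = 0 \<and> v = 0")
    case False
    then have nz: "u \<noteq> 0 \<or> v \<noteq> 0" by simp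
    then have "proj (a * u + b * v) (c * u + d * v) = proj (a' * u + b' * v) (c' * u + d' * v)"
      using arg_cong[OF eq, of "\<lambda>\<phi>. \<phi> (proj u v)"] by (simp add: mob_proj)
    then show ?thesis
      using proj_eq_iff[OF matrix_image_nonzero[OF det nz] matrix_image_nonzero[OF det' nz]] by blast
  qed simp
  have "(a * d - b * c) * (c' * d - d' * c) = 0" and "(a' * b - b' * a) * (a * d - b * c) = 0"
    using cross[of d "- c"] cross[of b "- a"] by (simp_all add: algebra_simps)
  then have e1: "c' * d = d' * c" and e2: "a' * b = b' * a"
    using det by simp_all
  have e3: "a * c' = a' * c" and e4: "b * d' = b' * d"
    using cross[of 1 0] cross[of 0 1] by simp_all
  have e5: "a * d' + b * c' = a' * d + b' * c"
    using cross[of 1 1] e3 e4 by (simp add: algebra_simps)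
  define \<mu> where "\<mu> = (a' * d - b' * c) / (a * d - b * c)"
  have "\<mu> * (a * d - b * c) = a' * d - b' * c"
    using det by (simp add: \<mu>_def)
  then have "a' = \<mu> * a \<and> b' = \<mu> * b \<and> c' = \<mu> * c \<and> d' = \<mu> * d"
    using e1 e2 e3 e4 e5 det by algebra
  then show ?thesis by blast
qed

lemma mob_unimodular:
  assumes "a * d - b * c \<noteq> 0"
  obtains \<alpha> \<beta> \<gamma> \<delta> where "\<alpha> * \<delta> - \<beta> * \<gamma> = 1" "mob a b c d = mob \<alpha> \<beta> \<gamma> \<delta>"
proof
  define r where "r = csqrt (a * d - b * c)"
  have r: "r \<noteq> 0" "r * r = a * d - b * c"
    using assms by (auto simp: r_def simp flip: power2_eq_square)
  show "(a / r) * (d / r) - (b / r) * (c / r) = 1"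
    using r by (simp add: field_simps)
  show "mob a b c d = mob (a / r) (b / r) (c / r) (d / r)"
    using mob_scale[of "1 / r" a b c d] r by simp
qed

definition moebius_conj :: "(sphere \<Rightarrow> sphere) \<Rightarrow> (sphere \<Rightarrow> sphere) \<Rightarrow> bool" where
  "moebius_conj f g \<longleftrightarrow> (\<exists>\<phi>. moebius \<phi> \<and> \<phi> \<circ> f = g \<circ> \<phi>)"

lemma moebius_conj_refl: "moebius_conj f f"
  unfolding moebius_conj_def using moebius_id by auto

lemma moebius_conj_sym:
  assumes "moebius_conj f g"
  shows "moebius_conj g f"
proof -
  obtain \<phi> where \<phi>: "moebius \<phi>" and conj: "\<phi> \<circ> f = g \<circ> \<phi>"
    using assms by (auto simp: moebius_conj_def)
  obtain \<phi>' where "moebius \<phi>'" and inv: "\<phi>' \<circ> \<phi> = id" "\<phi> \<circ> \<phi>' = id"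
    by (rule moebius_inverse[OF \<phi>])
  have "\<phi>' \<circ> g = \<phi>' \<circ> g \<circ> (\<phi> \<circ> \<phi>')"
    by (simp add: inv)
  also have "\<dots> = (\<phi>' \<circ> \<phi>) \<circ> f \<circ> \<phi>'"
    by (simp add: conj comp_assoc)
  also have "\<dots> = f \<circ> \<phi>'"
    by (simp add: inv)
  finally show ?thesis
    using \<open>moebius \<phi>'\<close> unfolding moebius_conj_def by blast
qed

lemma moebius_conj_trans:
  assumes "moebius_conj f g" "moebius_conj g h"
  shows "moebius_conj f h"
proof -
  obtain \<phi> \<psi> where "moebius \<phi>" "\<phi> \<circ> f = g \<circ> \<phi>" "moebius \<psi>" "\<psi> \<circ> g = h \<circ> \<psi>"
    using assms by (auto simp: moebius_conj_def)
  then have "moebius (\<psi> \<circ> \<phi>)" "(\<psi> \<circ> \<phi>) \<circ> f = h \<circ> (\<psi> \<circ> \<phi>)"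
    by (simp_all add: moebius_comp comp_assoc) (simp flip: comp_assoc)
  then show ?thesis
    unfolding moebius_conj_def by blast
qed

lemma mconj_iff: "(f, g) \<in> mconj \<longleftrightarrow> f \<in> Rat2 \<and> g \<in> Rat2 \<and> moebius_conj f g"
  by (auto simp: mconj_def moebius_conj_def)

lemma equiv_mconj: "equiv Rat2 mconj"
  by (rule equivI)
    (auto simp: refl_on_def sym_def trans_def mconj_iff
      intro: moebius_conj_refl moebius_conj_sym moebius_conj_trans)

lemma AS_value_iff:
  "AS_value f a s \<longleftrightarrow> (\<exists>\<alpha> \<beta> \<gamma> \<delta>. \<alpha> * \<delta> - \<beta> * \<gamma> = 1 \<and> moebius_conj f (normal_form \<alpha> \<beta> \<gamma> \<delta>) \<and>
      a = \<alpha> * \<delta> \<and> s = \<alpha> ^ 3 * \<beta> + \<gamma> * \<delta> ^ 3)"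
  unfolding AS_value_def moebius_conj_def by blast

lemma AS_value_moebius_conj:
  assumes "moebius_conj f g"
  shows "AS_value f a s \<longleftrightarrow> AS_value g a s"
proof -
  have "moebius_conj f h \<longleftrightarrow> moebius_conj g h" for h
    using assms moebius_conj_sym moebius_conj_trans by blast
  then show ?thesis
    unfolding AS_value_iff by simp
qed

section \<open>Normal forms and their critical points\<close>

definition sq :: "sphere \<Rightarrow> sphere" where
  "sq = map_option (\<lambda>z. z\<^sup>2)"

lemma sq_proj: "sq (proj x y) = proj (x\<^sup>2) (y\<^sup>2)"
  by (simp add: sq_def proj_def power_divide)

lemma surj_sq: "surj sq"
  by (rule surjI[of _ "map_option csqrt"]) (simp add: sq_def option.map_comp comp_def option.map_ident)

lemma normal_form_eq_mob_sq: "normal_form \<alpha> \<beta> \<gamma> \<delta> = mob \<alpha> \<beta> \<gamma> \<delta> \<circ> sq"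
proof
  fix P
  show "normal_form \<alpha> \<beta> \<gamma> \<delta> P = (mob \<alpha> \<beta> \<gamma> \<delta> \<circ> sq) P"
    by (cases P) (auto simp: normal_form_def mob_def rat_map_def sq_def numeral_2_eq_2 ac_simps)
qed

lemma sq_comp_mob:
  assumes "a * b = 0" "c * d = 0"
  shows "sq \<circ> mob a b c d = mob (a\<^sup>2) (b\<^sup>2) (c\<^sup>2) (d\<^sup>2) \<circ> sq"
proof (rule sphere_fun_eqI)
  fix x y :: complex
  assume nz: "x \<noteq> 0 \<or> y \<noteq> 0"
  then have nz2: "x\<^sup>2 \<noteq> 0 \<or> y\<^sup>2 \<noteq> 0" by simp
  have "(a * x + b * y)\<^sup>2 = a\<^sup>2 * x\<^sup>2 + b\<^sup>2 * y\<^sup>2"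
    and "(c * x + d * y)\<^sup>2 = c\<^sup>2 * x\<^sup>2 + d\<^sup>2 * y\<^sup>2"
    using assms by algebra+
  then show "(sq \<circ> mob a b c d) (proj x y) = (mob (a\<^sup>2) (b\<^sup>2) (c\<^sup>2) (d\<^sup>2) \<circ> sq) (proj x y)"
    by (simp add: mob_proj[OF nz] mob_proj[OF nz2] sq_proj)
qed

lemma det_squares_nonzero:
  fixes a b c d :: "'a :: idom"
  assumes "a * b = 0" "c * d = 0" "a * d - b * c \<noteq> 0"
  shows "a\<^sup>2 * d\<^sup>2 - b\<^sup>2 * c\<^sup>2 \<noteq> 0"
proof -
  have "(a\<^sup>2 * d\<^sup>2 - b\<^sup>2 * c\<^sup>2)\<^sup>2 = (a * d - b * c) ^ 4"
    using assms(1,2) by algebra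
  then show ?thesis
    using assms(3) by auto
qed

lemma mob_comp_normal_form:
  assumes "\<alpha> * \<delta> - \<beta> * \<gamma> \<noteq> 0"
  shows "mob a b c d \<circ> normal_form \<alpha> \<beta> \<gamma> \<delta>
       = mob (a * \<alpha> + b * \<gamma>) (a * \<beta> + b * \<delta>) (c * \<alpha> + d * \<gamma>) (c * \<beta> + d * \<delta>) \<circ> sq"
  by (simp add: normal_form_eq_mob_sq mob_comp[OF assms] flip: comp_assoc)

lemma normal_form_comp_mob:
  assumes "a * b = 0" "c * d = 0" "a * d - b * c \<noteq> 0"
  shows "normal_form \<alpha> \<beta> \<gamma> \<delta> \<circ> mob a b c d
       = mob (\<alpha> * a\<^sup>2 + \<beta> * c\<^sup>2) (\<alpha> * b\<^sup>2 + \<beta> * d\<^sup>2) (\<gamma> * a\<^sup>2 + \<delta> * c\<^sup>2) (\<gamma> * b\<^sup>2 + \<delta> * d\<^sup>2) \<circ> sq"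
  by (simp add: normal_form_eq_mob_sq comp_assoc sq_comp_mob[OF assms(1,2)]
      mob_comp[OF det_squares_nonzero[OF assms]] flip: comp_assoc[of "mob \<alpha> \<beta> \<gamma> \<delta>"])

lemma surj_comp_cancel: "surj f \<Longrightarrow> g \<circ> f = h \<circ> f \<Longrightarrow> g = h"
  by (metis surj_iff comp_assoc comp_id)

text \<open>For a map of degree 2, a point is critical iff it is the only preimage of its image;
  this fibre condition is used instead of derivatives.\<close>

definition crit :: "('a \<Rightarrow> 'b) \<Rightarrow> 'a \<Rightarrow> bool" where
  "crit f x \<longleftrightarrow> (\<forall>y. f y = f x \<longrightarrow> y = x)"

lemma crit_comp_inj: "inj g \<Longrightarrow> crit (g \<circ> f) x \<longleftrightarrow> crit f x"
  by (simp add: crit_def inj_eq)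

lemma crit_sq_iff: "crit sq x \<longleftrightarrow> x = Some 0 \<or> x = None"
proof (cases x)
  case (Some z)
  have "sq (Some (- z)) = sq x"
    using Some by (simp add: sq_def)
  then have "crit sq x \<Longrightarrow> z = 0"
    using Some by (auto simp: crit_def)
  then show ?thesis
    using Some by (auto simp: crit_def sq_def)
qed (auto simp: crit_def sq_def)

lemma crit_normal_form_iff:
  assumes "\<alpha> * \<delta> - \<beta> * \<gamma> \<noteq> 0"
  shows "crit (normal_form \<alpha> \<beta> \<gamma> \<delta>) x \<longleftrightarrow> x = Some 0 \<or> x = None"
proof -
  have "inj (mob \<alpha> \<beta> \<gamma> \<delta>)"
    using assms by (intro bij_is_inj bij_mob)
  then show ?thesis
    by (simp add: normal_form_eq_mob_sq crit_comp_inj crit_sq_iff)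
qed

lemma crit_conj:
  assumes "bij \<psi>" "\<psi> \<circ> f = g \<circ> \<psi>" "crit f x"
  shows "crit g (\<psi> x)"
  unfolding crit_def
proof (intro allI impI)
  fix y
  assume y: "g y = g (\<psi> x)"
  obtain y' where y': "y = \<psi> y'"
    using assms(1) by (metis bij_pointE)
  have "\<psi> (f y') = \<psi> (f x)"
    using y y' assms(2) by (metis comp_apply)
  then have "f y' = f x"
    using assms(1) by (simp add: bij_def inj_eq)
  then have "y' = x"
    using assms(3) by (simp add: crit_def)
  then show "y = \<psi> x"
    using y' by simp
qed

lemma mob_permuting_0_inf:
  assumes "a * d - b * c \<noteq> 0"
    and "mob a b c d (Some 0) \<in> {Some 0, None}" "mob a b c d None \<in> {Some 0, None}"
  shows "a * b = 0 \<and> c * d = 0"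
proof -
  have "mob a b c d (Some 0) = proj b d" "mob a b c d None = proj a c"
    using mob_proj[of 0 1 a b c d] mob_proj[of 1 0 a b c d] by simp_all
  then have "b = 0 \<or> d = 0" "a = 0 \<or> c = 0"
    using assms(2,3) by (auto simp: proj_def split: if_splits)
  then show ?thesis
    using assms(1) by auto
qed

section \<open>Conjugacy between normal forms\<close>

lemma conj_normal_form_proportional:
  assumes ab: "a * b = 0" and cd: "c * d = 0" and det: "a * d - b * c \<noteq> 0"
    and det1: "\<alpha> * \<delta> - \<beta> * \<gamma> \<noteq> 0" and det2: "\<alpha>' * \<delta>' - \<beta>' * \<gamma>' \<noteq> 0"
    and conj: "mob a b c d \<circ> normal_form \<alpha> \<beta> \<gamma> \<delta> = normal_form \<alpha>' \<beta>' \<gamma>' \<delta>' \<circ> mob a b c d"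
  shows "\<exists>\<mu>. \<alpha>' * a\<^sup>2 + \<beta>' * c\<^sup>2 = \<mu> * (a * \<alpha> + b * \<gamma>) \<and> \<alpha>' * b\<^sup>2 + \<beta>' * d\<^sup>2 = \<mu> * (a * \<beta> + b * \<delta>) \<and>
    \<gamma>' * a\<^sup>2 + \<delta>' * c\<^sup>2 = \<mu> * (c * \<alpha> + d * \<gamma>) \<and> \<gamma>' * b\<^sup>2 + \<delta>' * d\<^sup>2 = \<mu> * (c * \<beta> + d * \<delta>)"
proof (rule mob_eq_imp_proportional)
  have "(a * \<alpha> + b * \<gamma>) * (c * \<beta> + d * \<delta>) - (a * \<beta> + b * \<delta>) * (c * \<alpha> + d * \<gamma>)
      = (a * d - b * c) * (\<alpha> * \<delta> - \<beta> * \<gamma>)"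
    by algebra
  then show "(a * \<alpha> + b * \<gamma>) * (c * \<beta> + d * \<delta>) - (a * \<beta> + b * \<delta>) * (c * \<alpha> + d * \<gamma>) \<noteq> 0"
    using det det1 by simp
  have "(\<alpha>' * a\<^sup>2 + \<beta>' * c\<^sup>2) * (\<gamma>' * b\<^sup>2 + \<delta>' * d\<^sup>2) - (\<alpha>' * b\<^sup>2 + \<beta>' * d\<^sup>2) * (\<gamma>' * a\<^sup>2 + \<delta>' * c\<^sup>2)
      = (\<alpha>' * \<delta>' - \<beta>' * \<gamma>') * (a\<^sup>2 * d\<^sup>2 - b\<^sup>2 * c\<^sup>2)"
    by algebra
  then show "(\<alpha>' * a\<^sup>2 + \<beta>' * c\<^sup>2) * (\<gamma>' * b\<^sup>2 + \<delta>' * d\<^sup>2) - (\<alpha>' * b\<^sup>2 + \<beta>' * d\<^sup>2) * (\<gamma>' * a\<^sup>2 + \<delta>' * c\<^sup>2) \<noteq> 0"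
    using det2 det_squares_nonzero[OF ab cd det] by simp
  show "mob (a * \<alpha> + b * \<gamma>) (a * \<beta> + b * \<delta>) (c * \<alpha> + d * \<gamma>) (c * \<beta> + d * \<delta>)
      = mob (\<alpha>' * a\<^sup>2 + \<beta>' * c\<^sup>2) (\<alpha>' * b\<^sup>2 + \<beta>' * d\<^sup>2) (\<gamma>' * a\<^sup>2 + \<delta>' * c\<^sup>2) (\<gamma>' * b\<^sup>2 + \<delta>' * d\<^sup>2)"
    using conj surj_sq surj_comp_cancel
    by (metis mob_comp_normal_form[OF det1] normal_form_comp_mob[OF ab cd det])
qed

lemma normal_form_conj_invariants:
  assumes det1: "\<alpha> * \<delta> - \<beta> * \<gamma> = 1" and det2: "\<alpha>' * \<delta>' - \<beta>' * \<gamma>' = 1"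
    and "moebius_conj (normal_form \<alpha> \<beta> \<gamma> \<delta>) (normal_form \<alpha>' \<beta>' \<gamma>' \<delta>')"
  shows "\<alpha>' * \<delta>' = \<alpha> * \<delta> \<and> \<alpha>' ^ 3 * \<beta>' + \<gamma>' * \<delta>' ^ 3 = \<alpha> ^ 3 * \<beta> + \<gamma> * \<delta> ^ 3"
proof -
  obtain a b c d where det: "a * d - b * c \<noteq> 0"
    and conj: "mob a b c d \<circ> normal_form \<alpha> \<beta> \<gamma> \<delta> = normal_form \<alpha>' \<beta>' \<gamma>' \<delta>' \<circ> mob a b c d"
    using assms(3) by (auto simp: moebius_conj_def moebius_iff_mob)
  \<comment> \<open>the conjugacy maps the critical points 0 and \<infinity> of one normal form to those of the other\<close>
  have "crit (normal_form \<alpha>' \<beta>' \<gamma>' \<delta>') (mob a b c d x)" if "x = Some 0 \<or> x = None" for x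
    using crit_conj[OF bij_mob[OF det] conj] crit_normal_form_iff det1 that by simp
  then have "a * b = 0 \<and> c * d = 0"
    using mob_permuting_0_inf[OF det] crit_normal_form_iff det2 by simp
  then obtain \<mu> where scaled: "\<alpha>' * a\<^sup>2 + \<beta>' * c\<^sup>2 = \<mu> * (a * \<alpha> + b * \<gamma>)" "\<alpha>' * b\<^sup>2 + \<beta>' * d\<^sup>2 = \<mu> * (a * \<beta> + b * \<delta>)"
    "\<gamma>' * a\<^sup>2 + \<delta>' * c\<^sup>2 = \<mu> * (c * \<alpha> + d * \<gamma>)" "\<gamma>' * b\<^sup>2 + \<delta>' * d\<^sup>2 = \<mu> * (c * \<beta> + d * \<delta>)"
    using conj_normal_form_proportional[OF _ _ det _ _ conj] det1 det2 by auto
  consider "b = 0" "c = 0" "a \<noteq> 0" "d \<noteq> 0" | "a = 0" "d = 0" "b \<noteq> 0" "c \<noteq> 0"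
    using \<open>a * b = 0 \<and> c * d = 0\<close> det by auto
  then show ?thesis
  proof cases
    case 1
    then show ?thesis using scaled det1 det2 by algebra
  next
    case 2
    then show ?thesis using scaled det1 det2 by algebra
  qed
qed

lemma normal_form_conj_scale:
  assumes l: "l \<noteq> 0" and det: "\<alpha> * \<delta> - \<beta> * \<gamma> \<noteq> 0"
    and "\<alpha>' = \<alpha> * l" "\<beta>' * l ^ 3 = \<beta>" "\<gamma>' = \<gamma> * l ^ 3" "\<delta>' * l = \<delta>"
  shows "moebius_conj (normal_form \<alpha> \<beta> \<gamma> \<delta>) (normal_form \<alpha>' \<beta>' \<gamma>' \<delta>')"
proof -
  have scaled: "\<alpha>' = l * \<alpha>" "\<beta>' * (l\<^sup>2)\<^sup>2 = l * \<beta>" "\<gamma>' = l * (l\<^sup>2 * \<gamma>)" "\<delta>' * (l\<^sup>2)\<^sup>2 = l * (l\<^sup>2 * \<delta>)"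
    using assms(3-6) by algebra+
  have "mob 1 0 0 (l\<^sup>2) \<circ> normal_form \<alpha> \<beta> \<gamma> \<delta> = mob \<alpha> \<beta> (l\<^sup>2 * \<gamma>) (l\<^sup>2 * \<delta>) \<circ> sq"
    using mob_comp_normal_form[OF det, of 1 0 0 "l\<^sup>2"] by simp
  also have "\<dots> = mob \<alpha>' (\<beta>' * (l\<^sup>2)\<^sup>2) \<gamma>' (\<delta>' * (l\<^sup>2)\<^sup>2) \<circ> sq"
    by (simp only: scaled mob_scale[OF l])
  also have "\<dots> = normal_form \<alpha>' \<beta>' \<gamma>' \<delta>' \<circ> mob 1 0 0 (l\<^sup>2)"
    using normal_form_comp_mob[of 1 0 0 "l\<^sup>2" \<alpha>' \<beta>' \<gamma>' \<delta>'] l by simp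
  finally have "mob 1 0 0 (l\<^sup>2) \<circ> normal_form \<alpha> \<beta> \<gamma> \<delta> = normal_form \<alpha>' \<beta>' \<gamma>' \<delta>' \<circ> mob 1 0 0 (l\<^sup>2)" .
  moreover have "moebius (mob 1 0 0 (l\<^sup>2))"
    using l by (intro moebius_mob) simp
  ultimately show ?thesis
    unfolding moebius_conj_def by blast
qed

lemma normal_form_conj_swap:
  assumes "\<alpha> * \<delta> - \<beta> * \<gamma> \<noteq> 0"
  shows "moebius_conj (normal_form \<alpha> \<beta> \<gamma> \<delta>) (normal_form \<delta> \<gamma> \<beta> \<alpha>)"
proof -
  have "mob 0 1 1 0 \<circ> normal_form \<alpha> \<beta> \<gamma> \<delta> = normal_form \<delta> \<gamma> \<beta> \<alpha> \<circ> mob 0 1 1 0"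
    using mob_comp_normal_form[OF assms, of 0 1 1 0] normal_form_comp_mob[of 0 1 1 0 \<delta> \<gamma> \<beta> \<alpha>]
    by simp
  moreover have "moebius (mob 0 1 1 0)"
    by (intro moebius_mob) simp
  ultimately show ?thesis
    unfolding moebius_conj_def by blast
qed

lemma complex_cube_root: "\<exists>l :: complex. l ^ 3 = c"
proof -
  have "(rcis (root 3 (cmod c)) (Arg c / 3)) ^ 3 = rcis (root 3 (cmod c) ^ 3) (real 3 * (Arg c / 3))"
    by (rule DeMoivre2)
  also have "\<dots> = c"
    by (simp add: rcis_cmod_Arg)
  finally show ?thesis by blast
qed

lemma unimodular_scaling_of_invariants:
  fixes \<alpha>1 \<beta>1 \<gamma>1 \<delta>1 \<alpha>2 \<beta>2 \<gamma>2 \<delta>2 :: complex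
  assumes "\<alpha>1 * \<delta>1 - \<beta>1 * \<gamma>1 = 1" "\<alpha>2 * \<delta>2 - \<beta>2 * \<gamma>2 = 1"
    and "\<alpha>2 * \<delta>2 = \<alpha>1 * \<delta>1" "\<alpha>2 ^ 3 * \<beta>2 = \<alpha>1 ^ 3 * \<beta>1" "\<gamma>2 * \<delta>2 ^ 3 = \<gamma>1 * \<delta>1 ^ 3"
  obtains l where "l \<noteq> 0" "\<alpha>2 = \<alpha>1 * l" "\<beta>2 * l ^ 3 = \<beta>1" "\<gamma>2 = \<gamma>1 * l ^ 3" "\<delta>2 * l = \<delta>1"
proof -
  consider "\<alpha>1 \<noteq> 0" | "\<alpha>1 = 0" "\<delta>1 \<noteq> 0" | "\<alpha>1 = 0" "\<delta>1 = 0"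
    by blast
  then show ?thesis
  proof cases
    case 1
    define l where "l = \<alpha>2 / \<alpha>1"
    have "\<alpha>2 = \<alpha>1 * l"
      using 1 by (simp add: l_def)
    moreover have "l \<noteq> 0 \<and> \<beta>2 * l ^ 3 = \<beta>1 \<and> \<gamma>2 = \<gamma>1 * l ^ 3 \<and> \<delta>2 * l = \<delta>1"
      using 1 assms \<open>\<alpha>2 = \<alpha>1 * l\<close> by algebra
    ultimately show ?thesis
      using that by blast
  next
    case 2
    then have "\<delta>2 \<noteq> 0"
      using assms by algebra
    define l where "l = \<delta>1 / \<delta>2"
    have "\<delta>2 * l = \<delta>1"
      using \<open>\<delta>2 \<noteq> 0\<close> by (simp add: l_def)
    moreover have "l \<noteq> 0 \<and> \<alpha>2 = \<alpha>1 * l \<and> \<beta>2 * l ^ 3 = \<beta>1 \<and> \<gamma>2 = \<gamma>1 * l ^ 3"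
      using 2 assms \<open>\<delta>2 * l = \<delta>1\<close> by algebra
    ultimately show ?thesis
      using that by blast
  next
    case 3
    obtain l where l: "l ^ 3 = \<gamma>2 / \<gamma>1"
      using complex_cube_root by blast
    have "\<gamma>1 \<noteq> 0"
      using 3 assms(1) by auto
    with l have "\<gamma>2 = \<gamma>1 * l ^ 3"
      by simp
    moreover have "l \<noteq> 0 \<and> \<alpha>2 = \<alpha>1 * l \<and> \<beta>2 * l ^ 3 = \<beta>1 \<and> \<delta>2 * l = \<delta>1"
      using 3 assms \<open>\<gamma>2 = \<gamma>1 * l ^ 3\<close> by algebra
    ultimately show ?thesis
      using that by blast
  qed
qed

lemma sum_prod_eq_imp_eq_or_swap:
  fixes b c b' c' :: "'a :: idom"
  assumes "b' + c' = b + c" "b' * c' = b * c"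
  shows "(b' = b \<and> c' = c) \<or> (b' = c \<and> c' = b)"
proof -
  have "(b' - b) * (b' - c) = 0"
    using assms by algebra
  then have "b' = b \<or> b' = c"
    by simp
  then show ?thesis
    using assms(1) by auto
qed

lemma normal_form_conj_of_invariants:
  fixes \<alpha>1 \<beta>1 \<gamma>1 \<delta>1 \<alpha>2 \<beta>2 \<gamma>2 \<delta>2 :: complex
  assumes det1: "\<alpha>1 * \<delta>1 - \<beta>1 * \<gamma>1 = 1" and det2: "\<alpha>2 * \<delta>2 - \<beta>2 * \<gamma>2 = 1"
    and A: "\<alpha>2 * \<delta>2 = \<alpha>1 * \<delta>1" and S: "\<alpha>2 ^ 3 * \<beta>2 + \<gamma>2 * \<delta>2 ^ 3 = \<alpha>1 ^ 3 * \<beta>1 + \<gamma>1 * \<delta>1 ^ 3"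
  shows "moebius_conj (normal_form \<alpha>1 \<beta>1 \<gamma>1 \<delta>1) (normal_form \<alpha>2 \<beta>2 \<gamma>2 \<delta>2)"
proof -
  have "(\<alpha>2 ^ 3 * \<beta>2) * (\<gamma>2 * \<delta>2 ^ 3) = (\<alpha>1 ^ 3 * \<beta>1) * (\<gamma>1 * \<delta>1 ^ 3)"
    using det1 det2 A by algebra
  from sum_prod_eq_imp_eq_or_swap[OF S this] show ?thesis
  proof
    assume "\<alpha>2 ^ 3 * \<beta>2 = \<alpha>1 ^ 3 * \<beta>1 \<and> \<gamma>2 * \<delta>2 ^ 3 = \<gamma>1 * \<delta>1 ^ 3"
    then obtain l where "l \<noteq> 0" "\<alpha>2 = \<alpha>1 * l" "\<beta>2 * l ^ 3 = \<beta>1" "\<gamma>2 = \<gamma>1 * l ^ 3" "\<delta>2 * l = \<delta>1"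
      using unimodular_scaling_of_invariants[OF det1 det2 A] by blast
    then show ?thesis
      using det1 by (intro normal_form_conj_scale) simp_all
  next
    assume swapped: "\<alpha>2 ^ 3 * \<beta>2 = \<gamma>1 * \<delta>1 ^ 3 \<and> \<gamma>2 * \<delta>2 ^ 3 = \<alpha>1 ^ 3 * \<beta>1"
    have det1': "\<delta>1 * \<alpha>1 - \<gamma>1 * \<beta>1 = 1"
      using det1 by (simp add: ac_simps)
    obtain l where "l \<noteq> 0" "\<alpha>2 = \<delta>1 * l" "\<beta>2 * l ^ 3 = \<gamma>1" "\<gamma>2 = \<beta>1 * l ^ 3" "\<delta>2 * l = \<alpha>1"
      using unimodular_scaling_of_invariants[OF det1' det2] A swapped by (auto simp: ac_simps)
    then have "moebius_conj (normal_form \<delta>1 \<gamma>1 \<beta>1 \<alpha>1) (normal_form \<alpha>2 \<beta>2 \<gamma>2 \<delta>2)"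
      using det1' by (intro normal_form_conj_scale) simp_all
    moreover have "moebius_conj (normal_form \<alpha>1 \<beta>1 \<gamma>1 \<delta>1) (normal_form \<delta>1 \<gamma>1 \<beta>1 \<alpha>1)"
      using det1 by (intro normal_form_conj_swap) simp
    ultimately show ?thesis
      by (rule moebius_conj_trans[rotated])
  qed
qed

section \<open>Every quadratic rational map has a normal form\<close>

definition hom2 :: "complex poly \<Rightarrow> complex \<Rightarrow> complex \<Rightarrow> complex" where
  "hom2 p x y = coeff p 2 * x\<^sup>2 + coeff p 1 * x * y + coeff p 0 * y\<^sup>2"

definition hom2_polar :: "complex poly \<Rightarrow> complex \<Rightarrow> complex \<Rightarrow> complex \<Rightarrow> complex \<Rightarrow> complex" where
  "hom2_polar p u v u' v' = 2 * coeff p 2 * u * u' + coeff p 1 * (u * v' + u' * v) + 2 * coeff p 0 * v * v'"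

lemma poly_degree_le_2:
  fixes p :: "complex poly"
  assumes "degree p \<le> 2"
  shows "poly p z = coeff p 0 + coeff p 1 * z + coeff p 2 * z\<^sup>2"
proof -
  have "poly p z = (\<Sum>i\<le>degree p. coeff p i * z ^ i)"
    by (rule poly_altdef)
  also have "\<dots> = (\<Sum>i\<le>2. coeff p i * z ^ i)"
    by (rule sum.mono_neutral_left) (use assms in \<open>auto simp: coeff_eq_0\<close>)
  also have "\<dots> = coeff p 0 + coeff p 1 * z + coeff p 2 * z\<^sup>2"
    by (simp add: numeral_2_eq_2)
  finally show ?thesis .
qed

lemma hom2_eq_poly:
  assumes "degree p \<le> 2" "y \<noteq> 0"
  shows "hom2 p x y = y\<^sup>2 * poly p (x / y)"
  using assms by (simp add: poly_degree_le_2 hom2_def field_simps power2_eq_square)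

lemma hom2_scale: "hom2 p (k * x) (k * y) = k\<^sup>2 * hom2 p x y"
  unfolding hom2_def by algebra

lemma hom2_linear_subst:
  "hom2 p (u2 * X + u1 * Y) (v2 * X + v1 * Y)
     = hom2 p u2 v2 * X\<^sup>2 + hom2_polar p u1 v1 u2 v2 * X * Y + hom2 p u1 v1 * Y\<^sup>2"
  unfolding hom2_def hom2_polar_def by algebra

lemma rat_map_2_proj:
  assumes "degree p \<le> 2" "degree q \<le> 2" "x \<noteq> 0 \<or> y \<noteq> 0"
  shows "rat_map p q 2 (proj x y) = proj (hom2 p x y) (hom2 q x y)"
proof (cases "y = 0")
  case True
  then show ?thesis
    using assms by (simp add: rat_map_def proj_def hom2_def)
next
  case False
  then show ?thesis
    using hom2_eq_poly[OF assms(1) False] hom2_eq_poly[OF assms(2) False]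
    by (simp add: rat_map_def proj_def)
qed

lemma admissible_hom2_nonzero:
  assumes "admissible p q 2" "x \<noteq> 0 \<or> y \<noteq> 0"
  shows "hom2 p x y \<noteq> 0 \<or> hom2 q x y \<noteq> 0"
proof (cases "y = 0")
  case True
  then show ?thesis
    using assms by (auto simp: hom2_def admissible_def)
next
  case False
  then show ?thesis
    using assms hom2_eq_poly[of p y x] hom2_eq_poly[of q y x] by (auto simp: admissible_def)
qed

text \<open>The resultant of the binary quadratic forms p2 x^2 + p1 x y + p0 y^2 and q2 x^2 + q1 x y + q0 y^2.\<close>

definition res2 :: "complex \<Rightarrow> complex \<Rightarrow> complex \<Rightarrow> complex \<Rightarrow> complex \<Rightarrow> complex \<Rightarrow> complex" where
  "res2 p2 p1 p0 q2 q1 q0 = (p2 * q0 - p0 * q2)\<^sup>2 - (p2 * q1 - p1 * q2) * (p1 * q0 - p0 * q1)"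

lemma res2_swap: "res2 p2 p1 p0 q2 q1 q0 = res2 q2 q1 q0 p2 p1 p0"
  unfolding res2_def by algebra

lemma res2_factor:
  "res2 p2 (- p2 * (r1 + r2)) (p2 * r1 * r2) q2 q1 q0
     = p2\<^sup>2 * (q0 + q1 * r1 + q2 * r1\<^sup>2) * (q0 + q1 * r2 + q2 * r2\<^sup>2)"
  unfolding res2_def by algebra

lemma quadratic_split:
  fixes a b c :: complex
  assumes "a \<noteq> 0"
  obtains r1 r2 where "b = - a * (r1 + r2)" "c = a * r1 * r2"
proof
  define s where "s = csqrt (b\<^sup>2 - 4 * a * c)"
  have s2: "s\<^sup>2 = b\<^sup>2 - 4 * a * c"
    by (simp add: s_def)
  show "b = - a * ((- b + s) / (2 * a) + (- b - s) / (2 * a))"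
    using assms by (simp add: field_simps)
  have "a * ((- b + s) / (2 * a)) * ((- b - s) / (2 * a)) = (b\<^sup>2 - s\<^sup>2) / (4 * a)"
    using assms by (simp add: field_simps power2_eq_square)
  then show "c = a * ((- b + s) / (2 * a)) * ((- b - s) / (2 * a))"
    using assms by (simp add: s2 field_simps)
qed

lemma res2_nonzero_if_coprime:
  fixes p q :: "complex poly"
  assumes "degree p \<le> 2" "degree q \<le> 2" "coeff p 2 \<noteq> 0"
    and "\<forall>z. poly p z \<noteq> 0 \<or> poly q z \<noteq> 0"
  shows "res2 (coeff p 2) (coeff p 1) (coeff p 0) (coeff q 2) (coeff q 1) (coeff q 0) \<noteq> 0"
proof -
  obtain r1 r2 where r: "coeff p 1 = - coeff p 2 * (r1 + r2)" "coeff p 0 = coeff p 2 * r1 * r2"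
    using quadratic_split[OF assms(3)] by blast
  have "poly p r1 = 0" "poly p r2 = 0"
    unfolding poly_degree_le_2[OF assms(1)] r by algebra+
  then have "poly q r1 \<noteq> 0" "poly q r2 \<noteq> 0"
    using assms(4) by metis+
  then show ?thesis
    using assms(3) unfolding r res2_factor poly_degree_le_2[OF assms(2)] by simp
qed

lemma admissible_res2_nonzero:
  assumes "admissible p q 2"
  shows "res2 (coeff p 2) (coeff p 1) (coeff p 0) (coeff q 2) (coeff q 1) (coeff q 0) \<noteq> 0"
proof (cases "coeff p 2 = 0")
  case False
  then show ?thesis
    using assms res2_nonzero_if_coprime[of p q] by (simp add: admissible_def)
next
  case True
  then have "res2 (coeff q 2) (coeff q 1) (coeff q 0) (coeff p 2) (coeff p 1) (coeff p 0) \<noteq> 0"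
    using assms res2_nonzero_if_coprime[of q p] by (auto simp: admissible_def)
  then show ?thesis
    by (simp add: res2_swap)
qed

lemma quadratic_form_independent_zeros:
  fixes A B C :: complex
  assumes "B\<^sup>2 - A * C \<noteq> 0"
  obtains u1 v1 u2 v2 where "A * u1\<^sup>2 + 2 * B * u1 * v1 + C * v1\<^sup>2 = 0"
    "A * u2\<^sup>2 + 2 * B * u2 * v2 + C * v2\<^sup>2 = 0" "u2 * v1 - u1 * v2 \<noteq> 0"
proof (cases "A = 0")
  case True
  then have "B \<noteq> 0"
    using assms by auto
  with True show ?thesis
    using that[of "- C" "2 * B" 1 0] by (simp add: algebra_simps power2_eq_square)
next
  case False
  define s where "s = csqrt (B\<^sup>2 - A * C)"
  have s2: "s\<^sup>2 = B\<^sup>2 - A * C"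
    by (simp add: s_def)
  then have "s \<noteq> 0"
    using assms by auto
  have "A * (- B + s)\<^sup>2 + 2 * B * (- B + s) * A + C * A\<^sup>2 = 0"
    and "A * (- B - s)\<^sup>2 + 2 * B * (- B - s) * A + C * A\<^sup>2 = 0"
    using s2 by algebra+
  moreover have "(- B - s) * A - (- B + s) * A \<noteq> 0"
    using \<open>s \<noteq> 0\<close> False by (simp add: algebra_simps)
  ultimately show ?thesis
    by (rule that)
qed

text \<open>The points (u1 : v1) and (u2 : v2) obtained below are the zeros of the Jacobian
  A u^2 + 2 B u v + C v^2 of the lift, i.e. the two critical points of the map.\<close>

lemma exists_critical_coordinates:
  assumes "admissible p q 2"
  obtains u1 v1 u2 v2 where "u2 * v1 - u1 * v2 \<noteq> 0"
    "hom2_polar p u1 v1 u2 v2 = 0" "hom2_polar q u1 v1 u2 v2 = 0"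
    "hom2 p u2 v2 * hom2 q u1 v1 - hom2 p u1 v1 * hom2 q u2 v2 \<noteq> 0"
proof -
  define A where "A = coeff p 2 * coeff q 1 - coeff p 1 * coeff q 2"
  define B where "B = coeff p 2 * coeff q 0 - coeff p 0 * coeff q 2"
  define C where "C = coeff p 1 * coeff q 0 - coeff p 0 * coeff q 1"
  have R: "B\<^sup>2 - A * C \<noteq> 0"
    using admissible_res2_nonzero[OF assms] by (simp add: res2_def A_def B_def C_def)
  then obtain u1 v1 u2 v2 where
    jac: "A * u1\<^sup>2 + 2 * B * u1 * v1 + C * v1\<^sup>2 = 0" "A * u2\<^sup>2 + 2 * B * u2 * v2 + C * v2\<^sup>2 = 0"
    and D: "u2 * v1 - u1 * v2 \<noteq> 0"
    by (rule quadratic_form_independent_zeros)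
  define a2 a1 a0 where "a2 = hom2 p u2 v2" "a1 = hom2_polar p u1 v1 u2 v2" "a0 = hom2 p u1 v1"
  define b2 b1 b0 where "b2 = hom2 q u2 v2" "b1 = hom2_polar q u1 v1 u2 v2" "b0 = hom2 q u1 v1"
  have "a2 * b1 - a1 * b2 = (u2 * v1 - u1 * v2) * (A * u2\<^sup>2 + 2 * B * u2 * v2 + C * v2\<^sup>2)"
    and "a1 * b0 - a0 * b1 = (u2 * v1 - u1 * v2) * (A * u1\<^sup>2 + 2 * B * u1 * v1 + C * v1\<^sup>2)"
    and "res2 a2 a1 a0 b2 b1 b0 = (u2 * v1 - u1 * v2) ^ 4 * (B\<^sup>2 - A * C)"
    unfolding a2_a1_a0_def b2_b1_b0_def A_def B_def C_def hom2_def hom2_polar_def res2_def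
    by algebra+
  then have t: "a2 * b1 - a1 * b2 = 0" "a1 * b0 - a0 * b1 = 0" and "(a2 * b0 - a0 * b2)\<^sup>2 \<noteq> 0"
    using jac D R by (simp_all add: res2_def)
  then have det: "b2 * (- a0) - (- a2) * b0 \<noteq> 0"
    by (simp add: algebra_simps)
  have "a1 = 0" "b1 = 0"
    using t matrix_image_nonzero[OF det, of a1 b1] by (auto simp: algebra_simps)
  with D det show ?thesis
    unfolding a2_a1_a0_def b2_b1_b0_def by (intro that) (simp_all add: algebra_simps)
qed

text \<open>The map \<open>mob v1 (- u1) (- v2) u2\<close> inverts [X : Y] \<mapsto> [u2 X + u1 Y : v2 X + v1 Y], which sends
  \<infinity> and 0 to the critical points; in these coordinates the lift of f has no mixed terms.\<close>

lemma rat_map_conj_critical_coordinates: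
  fixes p q :: "complex poly" and u1 v1 u2 v2 :: complex
  defines "a2 \<equiv> hom2 p u2 v2" and "a0 \<equiv> hom2 p u1 v1" and "b2 \<equiv> hom2 q u2 v2" and "b0 \<equiv> hom2 q u1 v1"
  assumes adm: "admissible p q 2" and D: "u2 * v1 - u1 * v2 \<noteq> 0"
    and polar: "hom2_polar p u1 v1 u2 v2 = 0" "hom2_polar q u1 v1 u2 v2 = 0"
  shows "mob v1 (- u1) (- v2) u2 \<circ> rat_map p q 2
       = (mob (v1 * a2 - u1 * b2) (v1 * a0 - u1 * b0) (u2 * b2 - v2 * a2) (u2 * b0 - v2 * a0) \<circ> sq)
           \<circ> mob v1 (- u1) (- v2) u2"
    (is "?\<phi> \<circ> _ = (?N \<circ> sq) \<circ> _")
proof (rule sphere_fun_eqI)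
  fix x y :: complex
  assume nz: "x \<noteq> 0 \<or> y \<noteq> 0"
  define X Y where "X = v1 * x + (- u1) * y" "Y = (- v2) * x + u2 * y"
  have "v1 * u2 - (- u1) * (- v2) \<noteq> 0"
    using D by (simp add: algebra_simps)
  then have nzXY: "X \<noteq> 0 \<or> Y \<noteq> 0"
    unfolding X_Y_def using nz by (rule matrix_image_nonzero)
  have even: "(u2 * v1 - u1 * v2)\<^sup>2 * hom2 r x y = hom2 r u2 v2 * X\<^sup>2 + hom2 r u1 v1 * Y\<^sup>2"
    if "hom2_polar r u1 v1 u2 v2 = 0" for r
  proof -
    have "(u2 * v1 - u1 * v2)\<^sup>2 * hom2 r x y = hom2 r (u2 * X + u1 * Y) (v2 * X + v1 * Y)"
      unfolding hom2_scale[symmetric] X_Y_def by (simp add: algebra_simps)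
    then show ?thesis
      using that by (simp add: hom2_linear_subst)
  qed
  have "(?\<phi> \<circ> rat_map p q 2) (proj x y)
      = proj (v1 * hom2 p x y - u1 * hom2 q x y) (u2 * hom2 q x y - v2 * hom2 p x y)"
    using adm nz admissible_hom2_nonzero[OF adm nz]
    by (simp add: rat_map_2_proj admissible_def mob_proj algebra_simps)
  also have "\<dots> = proj ((u2 * v1 - u1 * v2)\<^sup>2 * (v1 * hom2 p x y - u1 * hom2 q x y))
      ((u2 * v1 - u1 * v2)\<^sup>2 * (u2 * hom2 q x y - v2 * hom2 p x y))"
    using D by (simp add: proj_scale)
  also have "\<dots> = ?N (proj (X\<^sup>2) (Y\<^sup>2))"
    using nzXY even[OF polar(1)] even[OF polar(2)]
    by (simp add: mob_proj assms(1-4) algebra_simps)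
  also have "\<dots> = ((?N \<circ> sq) \<circ> ?\<phi>) (proj x y)"
    by (simp add: mob_proj[OF nz] sq_proj X_Y_def)
  finally show "(?\<phi> \<circ> rat_map p q 2) (proj x y) = ((?N \<circ> sq) \<circ> ?\<phi>) (proj x y)" .
qed

lemma admissible_conj_mob_sq:
  assumes adm: "admissible p q 2"
  shows "\<exists>a b c d. a * d - b * c \<noteq> 0 \<and> moebius_conj (rat_map p q 2) (mob a b c d \<circ> sq)"
proof -
  obtain u1 v1 u2 v2 where D: "u2 * v1 - u1 * v2 \<noteq> 0"
    and polar: "hom2_polar p u1 v1 u2 v2 = 0" "hom2_polar q u1 v1 u2 v2 = 0"
    and res: "hom2 p u2 v2 * hom2 q u1 v1 - hom2 p u1 v1 * hom2 q u2 v2 \<noteq> 0"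
    by (rule exists_critical_coordinates[OF adm])
  define a2 a0 b2 b0 where "a2 = hom2 p u2 v2" "a0 = hom2 p u1 v1" "b2 = hom2 q u2 v2" "b0 = hom2 q u1 v1"
  have "(v1 * a2 - u1 * b2) * (u2 * b0 - v2 * a0) - (v1 * a0 - u1 * b0) * (u2 * b2 - v2 * a2)
      = (u2 * v1 - u1 * v2) * (a2 * b0 - a0 * b2)"
    by algebra
  then have "(v1 * a2 - u1 * b2) * (u2 * b0 - v2 * a0) - (v1 * a0 - u1 * b0) * (u2 * b2 - v2 * a2) \<noteq> 0"
    using D res by (simp add: a2_a0_b2_b0_def)
  moreover have "moebius (mob v1 (- u1) (- v2) u2)"
    using D by (intro moebius_mob) (simp add: algebra_simps)
  ultimately show ?thesis
    using rat_map_conj_critical_coordinates[OF adm D polar]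
    unfolding moebius_conj_def a2_a0_b2_b0_def by blast
qed

section \<open>The moduli space M2\<close>

lemma Rat2_AS_value_exists:
  assumes "f \<in> Rat2"
  shows "\<exists>a s. AS_value f a s"
proof -
  obtain p q where f: "f = rat_map p q 2" and adm: "admissible p q 2"
    using assms by (auto simp: Rat2_def)
  obtain a b c d where det: "a * d - b * c \<noteq> 0" and conj: "moebius_conj f (mob a b c d \<circ> sq)"
    using admissible_conj_mob_sq[OF adm] f by blast
  from det obtain \<alpha> \<beta> \<gamma> \<delta> where "\<alpha> * \<delta> - \<beta> * \<gamma> = 1" "mob a b c d = mob \<alpha> \<beta> \<gamma> \<delta>"
    by (rule mob_unimodular)
  with conj show ?thesis
    unfolding AS_value_iff normal_form_eq_mob_sq by auto
qed

lemma AS_value_unique: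
  assumes "AS_value f a s" "AS_value f a' s'"
  shows "a' = a \<and> s' = s"
proof -
  obtain \<alpha> \<beta> \<gamma> \<delta> where det: "\<alpha> * \<delta> - \<beta> * \<gamma> = 1"
    and conj: "moebius_conj f (normal_form \<alpha> \<beta> \<gamma> \<delta>)" and "a = \<alpha> * \<delta>" "s = \<alpha> ^ 3 * \<beta> + \<gamma> * \<delta> ^ 3"
    using assms(1) unfolding AS_value_iff by blast
  moreover obtain \<alpha>' \<beta>' \<gamma>' \<delta>' where det': "\<alpha>' * \<delta>' - \<beta>' * \<gamma>' = 1"
    and conj': "moebius_conj f (normal_form \<alpha>' \<beta>' \<gamma>' \<delta>')" and "a' = \<alpha>' * \<delta>'" "s' = \<alpha>' ^ 3 * \<beta>' + \<gamma>' * \<delta>' ^ 3"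
    using assms(2) unfolding AS_value_iff by blast
  moreover have "moebius_conj (normal_form \<alpha> \<beta> \<gamma> \<delta>) (normal_form \<alpha>' \<beta>' \<gamma>' \<delta>')"
    using moebius_conj_sym[OF conj] conj' by (rule moebius_conj_trans)
  ultimately show ?thesis
    using normal_form_conj_invariants[OF det det'] by simp
qed

lemma AS_value_imp_mconj:
  assumes "f \<in> Rat2" "g \<in> Rat2" "AS_value f a s" "AS_value g a s"
  shows "(f, g) \<in> mconj"
proof -
  obtain \<alpha> \<beta> \<gamma> \<delta> where det: "\<alpha> * \<delta> - \<beta> * \<gamma> = 1"
    and conj: "moebius_conj f (normal_form \<alpha> \<beta> \<gamma> \<delta>)" and "a = \<alpha> * \<delta>" "s = \<alpha> ^ 3 * \<beta> + \<gamma> * \<delta> ^ 3"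
    using assms(3) unfolding AS_value_iff by blast
  moreover obtain \<alpha>' \<beta>' \<gamma>' \<delta>' where det': "\<alpha>' * \<delta>' - \<beta>' * \<gamma>' = 1"
    and conj': "moebius_conj g (normal_form \<alpha>' \<beta>' \<gamma>' \<delta>')" and "a = \<alpha>' * \<delta>'" "s = \<alpha>' ^ 3 * \<beta>' + \<gamma>' * \<delta>' ^ 3"
    using assms(4) unfolding AS_value_iff by blast
  ultimately have "moebius_conj (normal_form \<alpha> \<beta> \<gamma> \<delta>) (normal_form \<alpha>' \<beta>' \<gamma>' \<delta>')"
    using normal_form_conj_of_invariants[OF det det'] by simp
  then have "moebius_conj f g"
    using conj moebius_conj_sym[OF conj'] by (blast intro: moebius_conj_trans)
  with assms(1,2) show ?thesis
    by (simp add: mconj_iff)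
qed

lemma normal_form_in_Rat2:
  assumes "\<alpha> * \<delta> - \<beta> * \<gamma> \<noteq> 0"
  shows "normal_form \<alpha> \<beta> \<gamma> \<delta> \<in> Rat2"
proof -
  have "poly [:\<beta>, 0, \<alpha>:] z \<noteq> 0 \<or> poly [:\<delta>, 0, \<gamma>:] z \<noteq> 0" for z
  proof -
    have "\<alpha> * poly [:\<delta>, 0, \<gamma>:] z - \<gamma> * poly [:\<beta>, 0, \<alpha>:] z = \<alpha> * \<delta> - \<beta> * \<gamma>"
      by (simp add: algebra_simps)
    then show ?thesis
      using assms by auto
  qed
  moreover have "coeff [:\<beta>, 0, \<alpha>:] 2 \<noteq> 0 \<or> coeff [:\<delta>, 0, \<gamma>:] 2 \<noteq> 0"
    using assms by (auto simp: numeral_2_eq_2)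
  ultimately have "admissible [:\<beta>, 0, \<alpha>:] [:\<delta>, 0, \<gamma>:] 2"
    by (auto simp: admissible_def degree_pCons_eq_if)
  then show ?thesis
    unfolding Rat2_def normal_form_def by blast
qed

lemma exists_unimodular_with_invariants:
  fixes a s :: complex
  obtains \<alpha> \<beta> \<gamma> \<delta> where "\<alpha> * \<delta> - \<beta> * \<gamma> = 1" "a = \<alpha> * \<delta>" "s = \<alpha> ^ 3 * \<beta> + \<gamma> * \<delta> ^ 3"
proof (cases "a = 0")
  case False
  then have "a ^ 3 \<noteq> 0"
    by simp
  then obtain r1 r2 where r: "- s = - (a ^ 3) * (r1 + r2)" "a - 1 = a ^ 3 * r1 * r2"
    by (rule quadratic_split)
  show ?thesis
  proof (rule that[where \<alpha> = 1 and \<beta> = "a ^ 3 * r2" and \<gamma> = r1 and \<delta> = a])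
    show "1 * a - a ^ 3 * r2 * r1 = 1" "s = 1 ^ 3 * (a ^ 3 * r2) + r1 * a ^ 3"
      using r by (simp_all add: algebra_simps)
  qed simp
next
  case True
  show ?thesis
  proof (cases "s = 0")
    case True
    with \<open>a = 0\<close> show ?thesis
      by (intro that[where \<alpha> = 0 and \<beta> = 1 and \<gamma> = "- 1" and \<delta> = 0]) simp_all
  next
    case False
    with \<open>a = 0\<close> show ?thesis
      by (intro that[where \<alpha> = 0 and \<beta> = "- 1 / s" and \<gamma> = s and \<delta> = 1]) simp_all
  qed
qed

lemma AS_value_normal_form:
  "\<alpha> * \<delta> - \<beta> * \<gamma> = 1 \<Longrightarrow> AS_value (normal_form \<alpha> \<beta> \<gamma> \<delta>) (\<alpha> * \<delta>) (\<alpha> ^ 3 * \<beta> + \<gamma> * \<delta> ^ 3)"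
  unfolding AS_value_iff using moebius_conj_refl by blast

lemma Rat2_AS_value_surj: "\<exists>f \<in> Rat2. AS_value f a s"
proof -
  obtain \<alpha> \<beta> \<gamma> \<delta> where "\<alpha> * \<delta> - \<beta> * \<gamma> = 1" "a = \<alpha> * \<delta>" "s = \<alpha> ^ 3 * \<beta> + \<gamma> * \<delta> ^ 3"
    by (rule exists_unimodular_with_invariants)
  then have "normal_form \<alpha> \<beta> \<gamma> \<delta> \<in> Rat2" "AS_value (normal_form \<alpha> \<beta> \<gamma> \<delta>) a s"
    by (simp_all add: normal_form_in_Rat2 AS_value_normal_form)
  then show ?thesis
    by blast
qed

theorem mainTheorem11:
  shows "\<exists>\<Phi> :: (complex option \<Rightarrow> complex option) set \<Rightarrow> complex \<times> complex.
           bij_betw \<Phi> M2 UNIV \<and>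
           (\<forall>f \<in> Rat2. \<forall>a s. AS_value f a s \<longleftrightarrow> \<Phi> (mconj `` {f}) = (a, s))"
proof -
  let ?R = "\<lambda>f v. AS_value f (fst v) (snd v)"
  have "\<exists>\<Phi>. bij_betw \<Phi> (Rat2 // mconj) UNIV \<and> (\<forall>f \<in> Rat2. \<forall>v. ?R f v \<longleftrightarrow> \<Phi> (mconj `` {f}) = v)"
  proof (rule quotient_bij_betw_complete_invariant[OF equiv_mconj])
    show "\<exists>v. ?R f v" if "f \<in> Rat2" for f
      using Rat2_AS_value_exists[OF that] by simp
    show "v = w" if "?R f v" "?R f w" for f v w
      using AS_value_unique[OF that] by (simp add: prod_eq_iff)
    show "?R g v" if "(f, g) \<in> mconj" "?R f v" for f g v
      using that AS_value_moebius_conj by (auto simp: mconj_iff)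
    show "(f, g) \<in> mconj" if "f \<in> Rat2" "g \<in> Rat2" "?R f v" "?R g v" for f g v
      using AS_value_imp_mconj[OF that] .
    show "\<exists>f \<in> Rat2. ?R f v" for v
      using Rat2_AS_value_surj by blast
  qed
  then obtain \<Phi> where "bij_betw \<Phi> M2 UNIV" and \<Phi>: "\<forall>f \<in> Rat2. \<forall>v. ?R f v \<longleftrightarrow> \<Phi> (mconj `` {f}) = v"
    unfolding M2_def by blast
  moreover have "AS_value f a s \<longleftrightarrow> \<Phi> (mconj `` {f}) = (a, s)" if "f \<in> Rat2" for f a s
    using \<Phi> that by (metis fst_conv snd_conv)
  ultimately show ?thesis
    by blast
qed

end
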